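(* Let $G$ be the final graph of the uncoordinated construction (described in the context) on a set $P\subset\mathbb{R}^d$ of $n$ points with parameter $s>1$, let $\alpha$ be the aspect ratio of $P$, and let $\mathcal{W}=\{(P_i,Q_i)\}_{i=1}^m$ be the corresponding greedy WSPD, i.e. one pair $(B_r(p),B_r(q))$ with $r=|pq|/(2s+2)$ for each edge $pq$ of $G$. Then $\sum_{i=1}^m(|P_i|+|Q_i|)=O(n s^d\lg\alpha)$, where the implied constant depends only on $d$. Consequently the total number of messages in the distributed construction (described in the context) is $O(n s^d\lg\alpha)$.
   Context: Fix $d\ge 1$; $|xy|$ is Euclidean distance; $\lg$ is logarithm base 2; $B_r(p)=\{x\in P:|px|\le r\}$. The aspect ratio is $\alpha=\max_{u,v\in P}|uv|/\min_{u\ne v\in P}|uv|$. Uncoordinated construction: start with the graph $G$ on vertex set $P$ with no edges. Every ordered pair $(p,q)$ of distinct points of $P$ is processed exactly once, in an arbitrary order, one at a time. When $(p,q)$ is processed, the edge $pq$ is added to $G$ unless $G$ currently contains an edge whose endpoints can be labeled $p',q'$ with $|pp'|\le |p'q'|/(2s+2)$ and $|qq'|\le |p'q'|/(2s+2)$. $G$ is the graph after all pairs are processed. Distributed message model: whenever an edge $pq$ is built, one message is sent to each node of $B_r(p)$ and one to each node of $B_r(q)$, with $r=|pq|/(2s+2)$, informing it of the edge; so building $pq$ costs $|B_r(p)|+|B_r(q)|$ messages, and no other messages are counted. *)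

theory Defs
  imports "HOL-Analysis.Analysis"
begin

definition ballP :: "'a::metric_space set \<Rightarrow> 'a \<Rightarrow> real \<Rightarrow> 'a set" where
  "ballP P p r = {x \<in> P. dist p x \<le> r}"

definition rad :: "real \<Rightarrow> 'a::metric_space \<Rightarrow> 'a \<Rightarrow> real" where
  "rad s p q = dist p q / (2 * s + 2)"

definition covers :: "real \<Rightarrow> 'a::metric_space \<times> 'a \<Rightarrow> 'a \<times> 'a \<Rightarrow> bool" where
  "covers s e pq = (dist (fst pq) (fst e) \<le> rad s (fst e) (snd e) \<and>
                    dist (snd pq) (snd e) \<le> rad s (fst e) (snd e))"

definition blocked :: "real \<Rightarrow> ('a::metric_space \<times> 'a) set \<Rightarrow> 'a \<times> 'a \<Rightarrow> bool" where
  "blocked s E pq = (\<exists>e\<in>E. covers s e pq \<or> covers s (snd e, fst e) pq)"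

definition edge_cost :: "'a::metric_space set \<Rightarrow> real \<Rightarrow> 'a \<times> 'a \<Rightarrow> nat" where
  "edge_cost P s e = card (ballP P (fst e) (rad s (fst e) (snd e)))
                   + card (ballP P (snd e) (rad s (fst e) (snd e)))"

(* processing one ordered pair; state = (edges built so far, messages sent so far).
   Edges are stored as the ordered pair (p,q) that was processed when built. *)
definition uc_step :: "'a::metric_space set \<Rightarrow> real \<Rightarrow> ('a \<times> 'a) set \<times> nat \<Rightarrow> 'a \<times> 'a
                      \<Rightarrow> ('a \<times> 'a) set \<times> nat" where
  "uc_step P s st pq = (if blocked s (fst st) pq then st
                        else (insert pq (fst st), snd st + edge_cost P s pq))"

definition uc_run :: "'a::metric_space set \<Rightarrow> real \<Rightarrow> ('a \<times> 'a) list \<Rightarrow> ('a \<times> 'a) set \<times> nat" where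
  "uc_run P s L = foldl (uc_step P s) ({}, 0) L"

definition uc_edges :: "'a::metric_space set \<Rightarrow> real \<Rightarrow> ('a \<times> 'a) list \<Rightarrow> ('a \<times> 'a) set" where
  "uc_edges P s L = fst (uc_run P s L)"

definition uc_messages :: "'a::metric_space set \<Rightarrow> real \<Rightarrow> ('a \<times> 'a) list \<Rightarrow> nat" where
  "uc_messages P s L = snd (uc_run P s L)"

(* greedy WSPD: one pair (B_r(p), B_r(q)) per edge pq; sum of |P_i|+|Q_i| *)
definition wspd_size :: "'a::metric_space set \<Rightarrow> real \<Rightarrow> ('a \<times> 'a) set \<Rightarrow> nat" where
  "wspd_size P s E = (\<Sum>e\<in>E. card (ballP P (fst e) (rad s (fst e) (snd e)))
                             + card (ballP P (snd e) (rad s (fst e) (snd e))))"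

definition aspect_ratio :: "'a::metric_space set \<Rightarrow> real" where
  "aspect_ratio P = Max {dist u v | u v. u \<in> P \<and> v \<in> P} /
                    Min {dist u v | u v. u \<in> P \<and> v \<in> P \<and> u \<noteq> v}"

end

theory Submission
  imports Defs
begin

text \<open>No two edges of \<open>G\<close> cover each other, since
  the later one would have been blocked by the earlier. Sort the edges into dyadic length classes;
  there are at most \<open>lg \<alpha> + 1\<close> of them, and within a class radii differ by a factor at most 2, so two
  edges of one class whose corresponding endpoints are closer than the class radius \<open>\<delta>\<close> would cover
  each other. Hence the edges of one class whose first ball contains a fixed point \<open>x\<close> are pairs with
  components in balls around \<open>x\<close> of radii \<open>2\<delta>\<close> and \<open>(4s+6)\<delta>\<close> that are \<open>\<delta>\<close>-separated, and a grid
  argument bounds their number by \<open>O(s^d)\<close>. Counting the incidences between points and balls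
  point by point gives \<open>O(n s^d lg \<alpha>)\<close>, and the messages sent are exactly these incidences.\<close>

definition grid_cell :: "real \<Rightarrow> 'a::euclidean_space \<Rightarrow> 'a \<Rightarrow> int" where
  "grid_cell h y = restrict (\<lambda>b. \<lfloor>(y \<bullet> b) / h\<rfloor>) Basis"

lemma dist_lt_if_grid_cell_eq:
  fixes y z :: "'a::euclidean_space" and h :: real
  assumes h: "h > 0" and eq: "grid_cell h y = grid_cell h z"
  shows "dist y z < real DIM('a) * h"
proof -
  have coord: "\<bar>(y - z) \<bullet> b\<bar> < h" if b: "b \<in> Basis" for b
  proof -
    have "\<lfloor>(y \<bullet> b) / h\<rfloor> = \<lfloor>(z \<bullet> b) / h\<rfloor>"
      using eq b unfolding grid_cell_def by (metis restrict_apply')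
    then have "\<bar>(y \<bullet> b) / h - (z \<bullet> b) / h\<bar> < 1" by linarith
    with h show ?thesis by (simp add: inner_diff_left diff_divide_distrib[symmetric] abs_divide)
  qed
  have "dist y z \<le> (\<Sum>b\<in>Basis. \<bar>(y - z) \<bullet> b\<bar>)"
    unfolding dist_norm by (rule norm_le_l1)
  also have "\<dots> < (\<Sum>b\<in>(Basis::'a set). h)"
    by (rule sum_strict_mono) (auto simp: coord)
  finally show ?thesis by simp
qed

lemma card_grid_cells_cball:
  fixes x :: "'a::euclidean_space"
  assumes h: "h > 0" and R: "R \<ge> 0"
  shows "finite (grid_cell h ` cball x R)"
    and "real (card (grid_cell h ` cball x R)) \<le> (2 * R / h + 2) ^ DIM('a)"
proof -
  define I where "I b = {\<lfloor>(x \<bullet> b - R) / h\<rfloor> .. \<lfloor>(x \<bullet> b + R) / h\<rfloor>}" for b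
  have sub: "grid_cell h ` cball x R \<subseteq> PiE Basis I"
  proof clarify
    fix y assume "y \<in> cball x R"
    have "x \<bullet> b - R \<le> y \<bullet> b \<and> y \<bullet> b \<le> x \<bullet> b + R" if "b \<in> Basis" for b
    proof -
      have "\<bar>(y - x) \<bullet> b\<bar> \<le> R"
        using Basis_le_norm[OF that, of "y - x"] \<open>y \<in> cball x R\<close>
        by (simp add: dist_norm norm_minus_commute)
      then show ?thesis by (auto simp: inner_diff_left abs_le_iff)
    qed
    then have bounds: "(x \<bullet> b - R) / h \<le> (y \<bullet> b) / h \<and> (y \<bullet> b) / h \<le> (x \<bullet> b + R) / h"
      if "b \<in> Basis" for b
      using h that by (auto intro!: divide_right_mono)
    show "grid_cell h y \<in> PiE Basis I"
      unfolding grid_cell_def I_def by (auto intro!: floor_mono dest!: bounds)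
  qed
  have card_I: "real (card (I b)) \<le> 2 * R / h + 2" for b
  proof -
    have "(x \<bullet> b - R) / h \<le> (x \<bullet> b + R) / h" using h R by (auto intro: divide_right_mono)
    then have "\<lfloor>(x \<bullet> b - R) / h\<rfloor> \<le> \<lfloor>(x \<bullet> b + R) / h\<rfloor>" by (rule floor_mono)
    then have "real (card (I b)) = \<lfloor>(x \<bullet> b + R) / h\<rfloor> - \<lfloor>(x \<bullet> b - R) / h\<rfloor> + 1"
      unfolding I_def by simp
    also have "\<dots> \<le> (x \<bullet> b + R) / h - ((x \<bullet> b - R) / h - 1) + 1"
      using of_int_floor_le[of "(x \<bullet> b + R) / h"] real_of_int_floor_gt_diff_one[of "(x \<bullet> b - R) / h"]
      by linarith
    also have "\<dots> = 2 * R / h + 2" using h by (simp add: field_simps)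
    finally show ?thesis .
  qed
  have fin: "finite (PiE Basis I)" unfolding I_def by (intro finite_PiE) auto
  then show "finite (grid_cell h ` cball x R)" using sub by (rule finite_subset[rotated])
  have "real (card (grid_cell h ` cball x R)) \<le> (\<Prod>b\<in>Basis. real (card (I b)))"
    using card_mono[OF fin sub] by (simp add: card_PiE flip: of_nat_prod)
  also have "\<dots> \<le> (\<Prod>b\<in>(Basis::'a set). 2 * R / h + 2)"
    by (rule prod_mono) (simp add: card_I)
  finally show "real (card (grid_cell h ` cball x R)) \<le> (2 * R / h + 2) ^ DIM('a)" by simp
qed

text \<open>The pair of grid cells of side \<open>\<delta> / DIM('a)\<close> containing the two components is injective on \<open>S\<close>,
  since two points in one cell are closer than \<open>\<delta>\<close>.\<close>
lemma card_separated_pairs_le: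
  fixes S :: "('a::euclidean_space \<times> 'a) set"
  assumes \<delta>: "\<delta> > 0" and R: "R1 \<ge> 0" "R2 \<ge> 0"
    and S: "S \<subseteq> cball x1 R1 \<times> cball x2 R2"
    and separated: "\<And>e1 e2. e1 \<in> S \<Longrightarrow> e2 \<in> S \<Longrightarrow> dist (fst e1) (fst e2) < \<delta>
                       \<Longrightarrow> dist (snd e1) (snd e2) < \<delta> \<Longrightarrow> e1 = e2"
  shows "real (card S)
         \<le> (2 * R1 * DIM('a) / \<delta> + 2) ^ DIM('a) * (2 * R2 * DIM('a) / \<delta> + 2) ^ DIM('a)"
proof -
  define h where "h = \<delta> / DIM('a)"
  have h: "h > 0" using \<delta> by (simp add: h_def)
  have close: "dist y z < \<delta>" if "grid_cell h y = grid_cell h z" for y z :: 'a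
    using dist_lt_if_grid_cell_eq[OF h that] by (simp add: h_def)
  define cells where "cells = grid_cell h ` cball x1 R1 \<times> grid_cell h ` cball x2 R2"
  have "inj_on (map_prod (grid_cell h) (grid_cell h)) S"
  proof (rule inj_onI)
    fix e1 e2 assume "e1 \<in> S" "e2 \<in> S"
      and "map_prod (grid_cell h) (grid_cell h) e1 = map_prod (grid_cell h) (grid_cell h) e2"
    then show "e1 = e2"
      using separated close by (cases e1, cases e2) auto
  qed
  moreover have "map_prod (grid_cell h) (grid_cell h) ` S \<subseteq> cells"
    using S unfolding cells_def by auto
  moreover have "finite cells"
    unfolding cells_def using card_grid_cells_cball(1)[OF h] R by blast
  ultimately have "card S \<le> card cells" by (rule card_inj_on_le)
  also have "\<dots> = card (grid_cell h ` cball x1 R1) * card (grid_cell h ` cball x2 R2)"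
    unfolding cells_def by (rule card_cartesian_product)
  finally have "real (card S)
      \<le> real (card (grid_cell h ` cball x1 R1)) * real (card (grid_cell h ` cball x2 R2))"
    by (simp flip: of_nat_mult)
  also have "\<dots> \<le> (2 * R1 / h + 2) ^ DIM('a) * (2 * R2 / h + 2) ^ DIM('a)"
    using card_grid_cells_cball(2)[OF h] R h by (intro mult_mono) auto
  finally show ?thesis using \<delta> by (simp add: h_def)
qed

abbreviation mutually_covering :: "real \<Rightarrow> 'a::metric_space \<times> 'a \<Rightarrow> 'a \<times> 'a \<Rightarrow> bool" where
  "mutually_covering s e1 e2 \<equiv> covers s e1 e2 \<and> covers s e2 e1"

lemma covers_self: "s > 1 \<Longrightarrow> covers s e e"
  unfolding covers_def rad_def by (simp add: divide_nonneg_pos)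

definition uc_invariant :: "'a::metric_space set \<Rightarrow> real \<Rightarrow> ('a \<times> 'a) set \<Rightarrow> ('a \<times> 'a) set \<times> nat \<Rightarrow> bool" where
  "uc_invariant P s A st \<longleftrightarrow> finite (fst st) \<and> fst st \<subseteq> A
     \<and> snd st = (\<Sum>e\<in>fst st. edge_cost P s e)
     \<and> pairwise (\<lambda>e1 e2. \<not> mutually_covering s e1 e2) (fst st)"

lemma uc_step_invariant:
  assumes "s > 1" "uc_invariant P s A st" "pq \<in> A"
  shows "uc_invariant P s A (uc_step P s st pq)"
proof (cases "blocked s (fst st) pq")
  case True
  then show ?thesis using assms(2) by (simp add: uc_step_def)
next
  case False
  then have uncovered: "\<forall>e\<in>fst st. \<not> covers s e pq" unfolding blocked_def by blast
  then have "pq \<notin> fst st" using covers_self[OF assms(1)] by blast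
  with False uncovered assms(2,3) show ?thesis
    unfolding uc_invariant_def uc_step_def by (auto simp: pairwise_insert)
qed

lemma uc_run_invariant:
  assumes "s > 1"
  shows "uc_invariant P s (set L) (uc_run P s L)"
proof -
  have "uc_invariant P s (set L) (foldl (uc_step P s) st L')"
    if "uc_invariant P s (set L) st" "set L' \<subseteq> set L" for st L'
    using that by (induction L' arbitrary: st) (simp_all add: uc_step_invariant[OF assms])
  then show ?thesis unfolding uc_run_def by (simp add: uc_invariant_def)
qed

lemma uc_messages_eq_wspd_size:
  "s > 1 \<Longrightarrow> uc_messages P s L = wspd_size P s (uc_edges P s L)"
  using uc_run_invariant[of s P L]
  unfolding uc_messages_def uc_edges_def wspd_size_def uc_invariant_def edge_cost_def by simp

lemma rad_commute: "rad s p q = rad s q p"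
  unfolding rad_def by (simp add: dist_commute)

lemma covers_swap: "covers s (prod.swap e1) (prod.swap e2) = covers s e1 e2"
  unfolding covers_def by (auto simp: rad_commute)

lemma eq_if_endpoints_close:
  assumes "pairwise (\<lambda>e1 e2. \<not> mutually_covering s e1 e2) E" "e1 \<in> E" "e2 \<in> E"
    and "\<delta> \<le> rad s (fst e1) (snd e1)" "\<delta> \<le> rad s (fst e2) (snd e2)"
    and "dist (fst e1) (fst e2) < \<delta>" "dist (snd e1) (snd e2) < \<delta>"
  shows "e1 = e2"
  using assms unfolding pairwise_def covers_def by (force simp: dist_commute)

definition edge_packing_const :: "nat \<Rightarrow> real" where
  "edge_packing_const d = ((4 * real d + 2) * (22 * real d)) ^ d"

lemma edge_packing_const_pos: "edge_packing_const d > 0"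
  unfolding edge_packing_const_def by (cases d) auto

text \<open>Edges whose radius lies in \<open>[\<delta>, 2\<delta>]\<close> and whose first ball contains \<open>x\<close> have their first
  endpoint within \<open>2\<delta>\<close> of \<open>x\<close> and their second within \<open>(4s+6)\<delta>\<close>; by
  \<open>eq_if_endpoints_close\<close> they are \<open>\<delta>\<close>-separated as pairs.\<close>
lemma card_edges_of_scale_near_le:
  fixes E :: "('a::euclidean_space \<times> 'a) set"
  assumes s: "s > 1" and \<delta>: "\<delta> > 0"
    and noncovering: "pairwise (\<lambda>e1 e2. \<not> mutually_covering s e1 e2) E"
  shows "real (card {e\<in>E. \<delta> \<le> rad s (fst e) (snd e) \<and> rad s (fst e) (snd e) \<le> 2 * \<delta>
                           \<and> dist (fst e) x \<le> rad s (fst e) (snd e)})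
         \<le> edge_packing_const DIM('a) * s ^ DIM('a)"
    (is "real (card ?S) \<le> _")
proof -
  define d where "d = real DIM('a)"
  have d: "d \<ge> 1" unfolding d_def by simp
  have "?S \<subseteq> cball x (2 * \<delta>) \<times> cball x ((4 * s + 6) * \<delta>)"
  proof
    fix e assume "e \<in> ?S"
    moreover obtain p q where e: "e = (p, q)" by fastforce
    ultimately have near: "dist p x \<le> rad s p q" and small: "rad s p q \<le> 2 * \<delta>" by auto
    have "dist p q = (2 * s + 2) * rad s p q" unfolding rad_def using s by simp
    also have "\<dots> \<le> (2 * s + 2) * (2 * \<delta>)" using small s by (intro mult_left_mono) auto
    finally have "dist x q \<le> (4 * s + 6) * \<delta>"
      using dist_triangle[of x q p] near small by (simp add: dist_commute algebra_simps)
    then show "e \<in> cball x (2 * \<delta>) \<times> cball x ((4 * s + 6) * \<delta>)"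
      using near small e by (simp add: dist_commute)
  qed
  then have "real (card ?S)
      \<le> (2 * (2 * \<delta>) * d / \<delta> + 2) ^ DIM('a) * (2 * ((4 * s + 6) * \<delta>) * d / \<delta> + 2) ^ DIM('a)"
    unfolding d_def using \<delta> s eq_if_endpoints_close[OF noncovering]
    by (intro card_separated_pairs_le) auto
  also have "\<dots> = (4 * d + 2) ^ DIM('a) * (2 * (4 * s + 6) * d + 2) ^ DIM('a)"
    using \<delta> by (simp add: mult.commute[of _ d])
  also have "\<dots> \<le> (4 * d + 2) ^ DIM('a) * (22 * d * s) ^ DIM('a)"
  proof -
    have "d \<le> d * s" using d s by simp
    moreover have "2 * (4 * s + 6) * d + 2 = 8 * (d * s) + 12 * d + 2" "22 * d * s = 22 * (d * s)"
      by (simp_all add: algebra_simps)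
    ultimately have "2 * (4 * s + 6) * d + 2 \<le> 22 * d * s" using d by linarith
    then show ?thesis using d s by (intro mult_left_mono power_mono) auto
  qed
  also have "\<dots> = edge_packing_const DIM('a) * s ^ DIM('a)"
    unfolding edge_packing_const_def d_def by (simp only: power_mult_distrib mult.assoc)
  finally show ?thesis .
qed

lemma dyadic_scale:
  fixes y :: real
  assumes "y \<ge> 1"
  shows "2 ^ nat \<lfloor>log 2 y\<rfloor> \<le> y \<and> y < 2 ^ (nat \<lfloor>log 2 y\<rfloor> + 1)"
proof -
  define k where "k = nat \<lfloor>log 2 y\<rfloor>"
  have "\<lfloor>log 2 y\<rfloor> = int k" using assms by (simp add: k_def)
  then have "2 powr real k \<le> y \<and> y < 2 powr (real k + 1)"
    using floor_log_eq_powr_iff[of y 2 "int k"] assms by simp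
  then show ?thesis unfolding k_def[symmetric] by (simp add: powr_add powr_realpow)
qed

lemma nat_floor_log_plus_one_le: "real (nat \<lfloor>log 2 y\<rfloor>) + 1 \<le> 2 * max 1 (log 2 y)"
  by (cases "log 2 y \<ge> 0") linarith+

text \<open>Group the edges by dyadic scale: an edge of length \<open>\<ell> \<in> [m 2^k, m 2^(k+1))\<close> has radius in
  \<open>[\<delta>\<^sub>k, 2\<delta>\<^sub>k]\<close> with \<open>\<delta>\<^sub>k = m 2^k / (2s+2)\<close>, and there are \<open>\<lfloor>log\<^sub>2(D/m)\<rfloor> + 1\<close> scales.\<close>
lemma card_edges_near_point_le:
  fixes E :: "('a::euclidean_space \<times> 'a) set"
  assumes "finite E" and s: "s > 1" and m: "m > 0"
    and noncovering: "pairwise (\<lambda>e1 e2. \<not> mutually_covering s e1 e2) E"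
    and lengths: "\<And>e. e \<in> E \<Longrightarrow> m \<le> dist (fst e) (snd e) \<and> dist (fst e) (snd e) \<le> D"
  shows "real (card {e\<in>E. dist (fst e) x \<le> rad s (fst e) (snd e)})
         \<le> (real (nat \<lfloor>log 2 (D / m)\<rfloor>) + 1) * (edge_packing_const DIM('a) * s ^ DIM('a))"
proof -
  define K where "K = nat \<lfloor>log 2 (D / m)\<rfloor>"
  define \<delta> :: "nat \<Rightarrow> real" where "\<delta> k = m * 2 ^ k / (2 * s + 2)" for k
  define near where "near k = {e\<in>E. \<delta> k \<le> rad s (fst e) (snd e) \<and> rad s (fst e) (snd e) \<le> 2 * \<delta> k
                                   \<and> dist (fst e) x \<le> rad s (fst e) (snd e)}" for k
  have "\<exists>k\<le>K. \<delta> k \<le> rad s (fst e) (snd e) \<and> rad s (fst e) (snd e) \<le> 2 * \<delta> k" if "e \<in> E" for e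
  proof (intro exI conjI)
    define k where "k = nat \<lfloor>log 2 (dist (fst e) (snd e) / m)\<rfloor>"
    have ge1: "dist (fst e) (snd e) / m \<ge> 1" using lengths[OF that] m by simp
    from dyadic_scale[OF ge1]
    have "2 ^ k \<le> dist (fst e) (snd e) / m \<and> dist (fst e) (snd e) / m \<le> 2 * 2 ^ k"
      unfolding k_def by simp
    then have "m * 2 ^ k \<le> dist (fst e) (snd e) \<and> dist (fst e) (snd e) \<le> 2 * (m * 2 ^ k)"
      using m by (simp add: field_simps)
    then show "\<delta> k \<le> rad s (fst e) (snd e)" "rad s (fst e) (snd e) \<le> 2 * \<delta> k"
      using s unfolding \<delta>_def rad_def by (simp_all add: divide_right_mono)
    have "dist (fst e) (snd e) / m \<le> D / m" using lengths[OF that] m by (simp add: divide_right_mono)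
    then show "k \<le> K" unfolding k_def K_def using ge1 by (intro nat_mono floor_mono) simp
  qed
  then have "{e\<in>E. dist (fst e) x \<le> rad s (fst e) (snd e)} \<subseteq> (\<Union>k\<le>K. near k)"
    unfolding near_def by blast
  moreover have "finite (\<Union>k\<le>K. near k)" using \<open>finite E\<close> unfolding near_def by auto
  ultimately have "card {e\<in>E. dist (fst e) x \<le> rad s (fst e) (snd e)} \<le> card (\<Union>k\<le>K. near k)"
    by (rule card_mono[rotated])
  also have "\<dots> \<le> (\<Sum>k\<le>K. card (near k))" by (rule card_UN_le) simp
  finally have "card {e\<in>E. dist (fst e) x \<le> rad s (fst e) (snd e)} \<le> (\<Sum>k\<le>K. card (near k))" .
  then have "real (card {e\<in>E. dist (fst e) x \<le> rad s (fst e) (snd e)}) \<le> (\<Sum>k\<le>K. real (card (near k)))"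
    by (simp flip: of_nat_sum)
  also have "\<dots> \<le> (\<Sum>k\<le>K. edge_packing_const DIM('a) * s ^ DIM('a))"
    unfolding near_def using s m
    by (intro sum_mono card_edges_of_scale_near_le[OF s _ noncovering]) (simp add: \<delta>_def)
  finally show ?thesis by (simp add: K_def add.commute)
qed

lemma card_edges_near_point_snd_le:
  fixes E :: "('a::euclidean_space \<times> 'a) set"
  assumes "finite E" and s: "s > 1" and m: "m > 0"
    and noncovering: "pairwise (\<lambda>e1 e2. \<not> mutually_covering s e1 e2) E"
    and lengths: "\<And>e. e \<in> E \<Longrightarrow> m \<le> dist (fst e) (snd e) \<and> dist (fst e) (snd e) \<le> D"
  shows "real (card {e\<in>E. dist (snd e) x \<le> rad s (fst e) (snd e)})
         \<le> (real (nat \<lfloor>log 2 (D / m)\<rfloor>) + 1) * (edge_packing_const DIM('a) * s ^ DIM('a))"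
proof -
  have "{e\<in>E. dist (snd e) x \<le> rad s (fst e) (snd e)}
      = prod.swap ` {e\<in>prod.swap ` E. dist (fst e) x \<le> rad s (fst e) (snd e)}"
    by (force simp: rad_commute)
  then have "card {e\<in>E. dist (snd e) x \<le> rad s (fst e) (snd e)}
      = card {e\<in>prod.swap ` E. dist (fst e) x \<le> rad s (fst e) (snd e)}"
    by (simp add: card_image)
  moreover have "pairwise (\<lambda>e1 e2. \<not> mutually_covering s e1 e2) (prod.swap ` E)"
    using noncovering by (auto simp: pairwise_image covers_swap pairwise_def)
  moreover have "m \<le> dist (fst e) (snd e) \<and> dist (fst e) (snd e) \<le> D" if "e \<in> prod.swap ` E" for e
    using that lengths by (auto simp: dist_commute)
  ultimately show ?thesis
    using card_edges_near_point_le[of "prod.swap ` E" s m D x] \<open>finite E\<close> s m by simp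
qed

lemma aspect_ratio_eq_quotient:
  fixes P :: "'a::metric_space set"
  assumes "finite P" "card P \<ge> 2"
  obtains m D where "m > 0" "aspect_ratio P = D / m"
    and "\<And>u v. u \<in> P \<Longrightarrow> v \<in> P \<Longrightarrow> u \<noteq> v \<Longrightarrow> m \<le> dist u v \<and> dist u v \<le> D"
proof
  define Dists where "Dists = {dist u v | u v. u \<in> P \<and> v \<in> P \<and> u \<noteq> v}"
  define All where "All = {dist u v | u v. u \<in> P \<and> v \<in> P}"
  have "Dists \<subseteq> (\<lambda>(u, v). dist u v) ` (P \<times> P)" "All \<subseteq> (\<lambda>(u, v). dist u v) ` (P \<times> P)"
    unfolding Dists_def All_def by auto
  then have fin: "finite Dists" "finite All" using \<open>finite P\<close> by (auto dest: finite_subset)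
  obtain u v where "u \<in> P" "v \<in> P" "u \<noteq> v"
    using assms card_le_Suc0_iff_eq[OF \<open>finite P\<close>] by fastforce
  then have "Dists \<noteq> {}" unfolding Dists_def by auto
  then have "Min Dists \<in> Dists" using fin by simp
  then show "Min Dists > 0" unfolding Dists_def by auto
  show "aspect_ratio P = Max All / Min Dists"
    unfolding aspect_ratio_def Dists_def All_def ..
  show "Min Dists \<le> dist u v \<and> dist u v \<le> Max All" if "u \<in> P" "v \<in> P" "u \<noteq> v" for u v
    using that fin by (auto simp: Dists_def All_def intro!: Min_le Max_ge)
qed

lemma wspd_size_eq_sum_points:
  assumes "finite P" "finite E"
  shows "wspd_size P s E = (\<Sum>x\<in>P. card {e\<in>E. dist (fst e) x \<le> rad s (fst e) (snd e)}
                                  + card {e\<in>E. dist (snd e) x \<le> rad s (fst e) (snd e)})"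
proof -
  have "(\<Sum>e\<in>E. card {x\<in>P. R e x}) = (\<Sum>x\<in>P. card {e\<in>E. R e x})" for R
    by (rule sum_multicount_gen[OF assms(2,1)]) simp
  then show ?thesis unfolding wspd_size_def ballP_def sum.distrib by simp
qed

lemma wspd_size_le:
  fixes P :: "'a::euclidean_space set"
  assumes "finite P" "card P \<ge> 2" and s: "s > 1" and "finite E"
    and edges: "E \<subseteq> {(p, q). p \<in> P \<and> q \<in> P \<and> p \<noteq> q}"
    and noncovering: "pairwise (\<lambda>e1 e2. \<not> mutually_covering s e1 e2) E"
  shows "real (wspd_size P s E)
         \<le> 4 * edge_packing_const DIM('a) * real (card P) * s ^ DIM('a) * max 1 (log 2 (aspect_ratio P))"
proof -
  obtain m D where m: "m > 0" and \<alpha>: "aspect_ratio P = D / m"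
    and dists: "\<And>u v. u \<in> P \<Longrightarrow> v \<in> P \<Longrightarrow> u \<noteq> v \<Longrightarrow> m \<le> dist u v \<and> dist u v \<le> D"
    using aspect_ratio_eq_quotient[OF assms(1,2)] by blast
  have lengths: "m \<le> dist (fst e) (snd e) \<and> dist (fst e) (snd e) \<le> D" if "e \<in> E" for e
    using that edges dists by auto
  define B where "B = (real (nat \<lfloor>log 2 (D / m)\<rfloor>) + 1) * (edge_packing_const DIM('a) * s ^ DIM('a))"
  have "real (card {e\<in>E. dist (fst e) x \<le> rad s (fst e) (snd e)})
      + real (card {e\<in>E. dist (snd e) x \<le> rad s (fst e) (snd e)}) \<le> 2 * B" for x
    using card_edges_near_point_le[OF \<open>finite E\<close> s m noncovering lengths, where x = x]
      card_edges_near_point_snd_le[OF \<open>finite E\<close> s m noncovering lengths, where x = x]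
    unfolding B_def by linarith
  then have "real (wspd_size P s E) \<le> (\<Sum>x\<in>P. 2 * B)"
    unfolding wspd_size_eq_sum_points[OF \<open>finite P\<close> \<open>finite E\<close>] of_nat_sum of_nat_add
    by (rule sum_mono)
  also have "\<dots> = real (card P) * 2 * (real (nat \<lfloor>log 2 (D / m)\<rfloor>) + 1)
                    * (edge_packing_const DIM('a) * s ^ DIM('a))"
    by (simp add: B_def)
  also have "\<dots> \<le> real (card P) * 2 * (2 * max 1 (log 2 (D / m)))
                    * (edge_packing_const DIM('a) * s ^ DIM('a))"
    using edge_packing_const_pos[of "DIM('a)"] s
    by (intro mult_right_mono mult_left_mono nat_floor_log_plus_one_le) auto
  finally show ?thesis by (simp add: \<alpha> algebra_simps)
qed

theorem theorem15:
  "\<exists>C>0. \<forall>(P::'a::euclidean_space set) (s::real) (L::('a \<times> 'a) list).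
      finite P \<and> card P \<ge> 2 \<and> s > 1 \<and> distinct L \<and>
      set L = {(p, q). p \<in> P \<and> q \<in> P \<and> p \<noteq> q} \<longrightarrow>
        real (wspd_size P s (uc_edges P s L))
          \<le> C * real (card P) * s ^ DIM('a) * max 1 (log 2 (aspect_ratio P)) \<and>
        real (uc_messages P s L)
          \<le> C * real (card P) * s ^ DIM('a) * max 1 (log 2 (aspect_ratio P))"
proof (intro exI[of _ "4 * edge_packing_const DIM('a)"] conjI allI impI)
  show "4 * edge_packing_const DIM('a) > 0" using edge_packing_const_pos by simp
  fix P :: "'a set" and s :: real and L :: "('a \<times> 'a) list"
  assume H: "finite P \<and> card P \<ge> 2 \<and> s > 1 \<and> distinct L \<and>
    set L = {(p, q). p \<in> P \<and> q \<in> P \<and> p \<noteq> q}"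
  then have "finite (uc_edges P s L)" "uc_edges P s L \<subseteq> set L"
    and "pairwise (\<lambda>e1 e2. \<not> mutually_covering s e1 e2) (uc_edges P s L)"
    using uc_run_invariant[of s P L] by (auto simp: uc_invariant_def uc_edges_def)
  with H have "real (wspd_size P s (uc_edges P s L))
      \<le> 4 * edge_packing_const DIM('a) * real (card P) * s ^ DIM('a) * max 1 (log 2 (aspect_ratio P))"
    by (intro wspd_size_le) auto
  with H show "real (wspd_size P s (uc_edges P s L))
      \<le> 4 * edge_packing_const DIM('a) * real (card P) * s ^ DIM('a) * max 1 (log 2 (aspect_ratio P))"
    and "real (uc_messages P s L)
      \<le> 4 * edge_packing_const DIM('a) * real (card P) * s ^ DIM('a) * max 1 (log 2 (aspect_ratio P))"
    by (simp_all add: uc_messages_eq_wspd_size)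
qed

end
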